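(* In the variation of the temporal graph discovery game in which the Discoverer does not learn the static edge set, there is an algorithm that wins the game on any temporal graph with node set $V$ and lifetime $T_{\max}$ in $|V|\,T_{\max}$ rounds.
   Context: A temporal graph $\mathcal G=(V,E,\lambda)$ with lifetime $T_{\max}$ consists of a finite undirected static graph $(V,E)$ and a labeling $\lambda:E\to\{1,\dots,T_{\max}\}$; edge $e$ is present only at time $\lambda(e)$. Infection model with parameter $\delta\in\mathbb N^+$: given seed infections $S\subseteq V\times[0,T_{\max}]$ (at most $k$ per round), a seed $(u,t)$ makes $u$ infected at time $t$; otherwise a susceptible node $u$ becomes infected at time $t$ iff some neighbour $v$ infectious at time $t$ has $\lambda(uv)=t$ (exactly one infector recorded if several exist). A node infected at time $t$ is infectious at times $t+1,\dots,t+\delta$ and resistant afterwards. The infection log records triples $(u,v,t)$ ($u$ infected $v$ at time $t$). Game (unknown static graph variant): the Discoverer knows only $V$; each round it submits seeds and the Adversary answers with an infection log consistent with the seeds under some temporal graph on $V$ consistent with all previous answers. The Discoverer wins iff the temporal graph (edges and labels) it finally submits equals the Adversary's final temporal graph consistent with all logs. *)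

theory Defs
  imports Main
begin

text \<open>A temporal graph on node set V: a static edge set (2-element subsets of V)
  together with a labelling of the edges by times in {1..Tmax}.
  The labelling is only meaningful on the edge set.\<close>

type_synonym 'v tgraph = "'v set set \<times> ('v set \<Rightarrow> nat)"

definition temporal_graph :: "'v set \<Rightarrow> nat \<Rightarrow> 'v tgraph \<Rightarrow> bool" where
  "temporal_graph V Tmax G \<longleftrightarrow>
     (\<forall>e\<in>fst G. \<exists>u v. u \<in> V \<and> v \<in> V \<and> u \<noteq> v \<and> e = {u, v}) \<and>
     (\<forall>e\<in>fst G. snd G e \<in> {1..Tmax})"

definition same_tgraph :: "'v tgraph \<Rightarrow> 'v tgraph \<Rightarrow> bool" where
  "same_tgraph G H \<longleftrightarrow> fst G = fst H \<and> (\<forall>e\<in>fst G. snd G e = snd H e)"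

text \<open>itime v = Some s: node v was infected at time s. It is infectious at s+1..s+delta.\<close>
definition infectious :: "nat \<Rightarrow> ('v \<Rightarrow> nat option) \<Rightarrow> 'v \<Rightarrow> nat \<Rightarrow> bool" where
  "infectious \<delta> itime v t \<longleftrightarrow> (\<exists>s. itime v = Some s \<and> s < t \<and> t \<le> s + \<delta>)"

definition contact :: "'v tgraph \<Rightarrow> nat \<Rightarrow> ('v \<Rightarrow> nat option) \<Rightarrow> 'v \<Rightarrow> 'v \<Rightarrow> nat \<Rightarrow> bool" where
  "contact G \<delta> itime v u t \<longleftrightarrow>
     infectious \<delta> itime v t \<and> {u, v} \<in> fst G \<and> snd G {u, v} = t"

definition infection_run ::
  "'v set \<Rightarrow> nat \<Rightarrow> nat \<Rightarrow> 'v tgraph \<Rightarrow> ('v \<times> nat) set \<Rightarrow> ('v \<Rightarrow> nat option) \<Rightarrow> bool" where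
  "infection_run V Tmax \<delta> G S itime \<longleftrightarrow>
     (\<forall>u. u \<notin> V \<longrightarrow> itime u = None) \<and>
     (\<forall>u\<in>V. \<forall>t. itime u = Some t \<longleftrightarrow>
        t \<le> Tmax \<and> (\<forall>s<t. itime u \<noteq> Some s) \<and>
        ((u, t) \<in> S \<or> (\<exists>v\<in>V. contact G \<delta> itime v u t)))"

text \<open>L is an infection log (triples (v,u,t): v infected u at t) consistent with seeds S
  under G: every non-seed infection has exactly one recorded infector, which is a valid one,
  and nothing else is recorded.\<close>
definition infection_log ::
  "'v set \<Rightarrow> nat \<Rightarrow> nat \<Rightarrow> 'v tgraph \<Rightarrow> ('v \<times> nat) set \<Rightarrow> ('v \<times> 'v \<times> nat) set \<Rightarrow> bool" where
  "infection_log V Tmax \<delta> G S L \<longleftrightarrow>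
     (\<exists>itime. infection_run V Tmax \<delta> G S itime \<and>
        (\<forall>(v, u, t)\<in>L. u \<in> V \<and> v \<in> V \<and> itime u = Some t \<and> (u, t) \<notin> S \<and> contact G \<delta> itime v u t) \<and>
        (\<forall>u\<in>V. \<forall>t. itime u = Some t \<and> (u, t) \<notin> S \<longrightarrow> (\<exists>!v. (v, u, t) \<in> L)))"

definition valid_seeds :: "'v set \<Rightarrow> nat \<Rightarrow> nat \<Rightarrow> ('v \<times> nat) set \<Rightarrow> bool" where
  "valid_seeds V Tmax k S \<longleftrightarrow> S \<subseteq> V \<times> {0..Tmax} \<and> card S \<le> k"

type_synonym 'v history = "(('v \<times> nat) set \<times> ('v \<times> 'v \<times> nat) set) list"

definition consistent ::
  "'v set \<Rightarrow> nat \<Rightarrow> nat \<Rightarrow> 'v tgraph \<Rightarrow> 'v history \<Rightarrow> bool" where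
  "consistent V Tmax \<delta> G h \<longleftrightarrow> temporal_graph V Tmax G \<and>
     (\<forall>i<length h. infection_log V Tmax \<delta> G (fst (h ! i)) (snd (h ! i)))"

text \<open>A Discoverer strategy (knowing only V, Tmax, delta, k) is a seed-choice function nxt
  and a final-guess function gs, both depending only on the history. It wins in r rounds if,
  for every play of r rounds following the strategy, every temporal graph consistent with all
  answers equals the guess (the Adversary may pick any consistent graph at the end; answers
  are legal iff some graph is consistent with them).\<close>
definition discoverer_wins ::
  "'v set \<Rightarrow> nat \<Rightarrow> nat \<Rightarrow> nat \<Rightarrow> ('v history \<Rightarrow> ('v \<times> nat) set) \<Rightarrow> ('v history \<Rightarrow> 'v tgraph)
   \<Rightarrow> nat \<Rightarrow> bool" where
  "discoverer_wins V Tmax \<delta> k nxt gs r \<longleftrightarrow>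
     (\<forall>h. valid_seeds V Tmax k (nxt h)) \<and>
     (\<forall>h. length h = r \<and> (\<forall>i<r. fst (h ! i) = nxt (take i h)) \<longrightarrow>
        (\<forall>G. consistent V Tmax \<delta> G h \<longrightarrow> same_tgraph G (gs h)))"

end

theory Submission
  imports Defs
begin

text \<open>Every infection happens strictly after the infection of its infector, so in the
  run started from the single seed (a, s) nobody is infected before time s and only a at
  time s. Hence at time s + 1 the only infectious node is a (this needs \<delta> \<ge> 1): every
  neighbour b of a across an edge labelled s + 1 is infected then, and its recorded infector
  must be a, so the log contains (a, b, s + 1). Seeding the |V| Tmax pairs (a, s) with s < Tmax
  one per round therefore logs every edge together with its label, and conversely every
  logged triple is an edge with its label; the union of the logs determines the graph.\<close>

lemma infection_run_infected_in_V:
  assumes "infection_run V Tmax \<delta> G S itime" and "itime u = Some t"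
  shows "u \<in> V"
  using assms unfolding infection_run_def by force

lemma contact_infector_infected_before:
  assumes "contact G \<delta> itime v u t"
  obtains r where "itime v = Some r" and "r < t"
  using assms unfolding contact_def infectious_def by blast

lemma temporal_graph_edgeE:
  assumes "temporal_graph V Tmax G" and "e \<in> fst G"
  obtains a b s where "a \<in> V" "b \<in> V" "a \<noteq> b" "e = {a, b}" "snd G e = Suc s" "s < Tmax"
proof -
  have "\<exists>a b. a \<in> V \<and> b \<in> V \<and> a \<noteq> b \<and> e = {a, b}" and "snd G e \<in> {1..Tmax}"
    using assms unfolding temporal_graph_def by simp_all
  then show ?thesis using that by (cases "snd G e") auto
qed

lemma single_seed_run_time_ge:
  assumes run: "infection_run V Tmax \<delta> G {(a, s)} itime"
  shows "itime u = Some r \<Longrightarrow> s \<le> r"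
proof (induction r arbitrary: u rule: less_induct)
  case (less r)
  have "u \<in> V" using infection_run_infected_in_V[OF run less.prems] .
  then have "(u, r) = (a, s) \<or> (\<exists>v\<in>V. contact G \<delta> itime v u r)"
    using run less.prems unfolding infection_run_def by blast
  then show ?case
  proof
    assume "\<exists>v\<in>V. contact G \<delta> itime v u r"
    then obtain v r' where "itime v = Some r'" "r' < r"
      by (blast elim: contact_infector_infected_before)
    with less.IH show ?thesis by fastforce
  qed simp
qed

lemma single_seed_run_time_eq_seed:
  assumes run: "infection_run V Tmax \<delta> G {(a, s)} itime" and "itime u = Some s"
  shows "u = a"
proof -
  have "u \<in> V" using infection_run_infected_in_V[OF run assms(2)] .
  then have "(u, s) = (a, s) \<or> (\<exists>v\<in>V. contact G \<delta> itime v u s)"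
    using run assms(2) unfolding infection_run_def by blast
  moreover have "\<not> contact G \<delta> itime v u s" for v
    using single_seed_run_time_ge[OF run]
    by (metis contact_infector_infected_before not_le)
  ultimately show ?thesis by blast
qed

lemma single_seed_run_seed:
  assumes run: "infection_run V Tmax \<delta> G {(a, s)} itime" and "a \<in> V" and "s \<le> Tmax"
  shows "itime a = Some s"
proof -
  have "\<forall>r<s. itime a \<noteq> Some r" using single_seed_run_time_ge[OF run] leD by blast
  then show ?thesis using run assms(2,3) unfolding infection_run_def by blast
qed

lemma single_seed_run_infector:
  assumes run: "infection_run V Tmax \<delta> G {(a, s)} itime"
    and "contact G \<delta> itime v u (Suc s)"
  shows "v = a"
proof -
  obtain r where r: "itime v = Some r" "r < Suc s"
    using assms(2) by (rule contact_infector_infected_before)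
  with single_seed_run_time_ge[OF run] have "r = s" by fastforce
  with r(1) show ?thesis using single_seed_run_time_eq_seed[OF run] by simp
qed

lemma single_seed_run_neighbour:
  assumes run: "infection_run V Tmax \<delta> G {(a, s)} itime"
    and "\<delta> \<ge> 1" and "a \<in> V" and "b \<in> V" and "a \<noteq> b" and "Suc s \<le> Tmax"
    and "{a, b} \<in> fst G" and "snd G {a, b} = Suc s"
  shows "itime b = Some (Suc s)"
proof -
  have "contact G \<delta> itime a b (Suc s)"
    using single_seed_run_seed[OF run] assms(2-8)
    unfolding contact_def infectious_def by (simp add: insert_commute)
  moreover have "\<forall>r<Suc s. itime b \<noteq> Some r"
    using single_seed_run_time_ge[OF run] single_seed_run_time_eq_seed[OF run] \<open>a \<noteq> b\<close>
    by (metis le_antisym less_Suc_eq_le)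
  ultimately show ?thesis using run assms(3,4,6) unfolding infection_run_def by blast
qed

lemma single_seed_log_records_edge:
  assumes log: "infection_log V Tmax \<delta> G {(a, s)} L"
    and "\<delta> \<ge> 1" and "a \<in> V" and "b \<in> V" and "a \<noteq> b" and "Suc s \<le> Tmax"
    and "{a, b} \<in> fst G" and "snd G {a, b} = Suc s"
  shows "(a, b, Suc s) \<in> L"
proof -
  obtain itime where run: "infection_run V Tmax \<delta> G {(a, s)} itime"
    and entries: "\<forall>(v, u, t)\<in>L. u \<in> V \<and> v \<in> V \<and> itime u = Some t \<and> (u, t) \<notin> {(a, s)}
                                  \<and> contact G \<delta> itime v u t"
    and recorded: "\<forall>u\<in>V. \<forall>t. itime u = Some t \<and> (u, t) \<notin> {(a, s)} \<longrightarrow> (\<exists>!v. (v, u, t) \<in> L)"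
    using log unfolding infection_log_def by (elim exE conjE) (rule that)
  have "itime b = Some (Suc s)"
    using single_seed_run_neighbour[OF run] assms(2-8) by blast
  moreover have "(b, Suc s) \<notin> {(a, s)}" by simp
  ultimately have "\<exists>!v. (v, b, Suc s) \<in> L"
    using recorded \<open>b \<in> V\<close> by simp
  then obtain v where v: "(v, b, Suc s) \<in> L" by blast
  then have "v = a" using entries single_seed_run_infector[OF run] by blast
  with v show ?thesis by simp
qed

lemma infection_log_entry_is_edge:
  assumes "infection_log V Tmax \<delta> G S L" and "(v, u, t) \<in> L"
  shows "{u, v} \<in> fst G \<and> snd G {u, v} = t"
  using assms unfolding infection_log_def contact_def by fastforce

definition logged_tgraph :: "('v \<times> 'v \<times> nat) set \<Rightarrow> 'v tgraph" where
  "logged_tgraph L =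
     ({{u, v} | u v t. (v, u, t) \<in> L}, \<lambda>e. SOME t. \<exists>u v. e = {u, v} \<and> (v, u, t) \<in> L)"

lemma same_tgraph_logged_tgraph:
  assumes sound: "\<And>v u t. (v, u, t) \<in> L \<Longrightarrow> {u, v} \<in> fst G \<and> snd G {u, v} = t"
    and complete: "\<And>e. e \<in> fst G \<Longrightarrow> \<exists>u v. e = {u, v} \<and> (v, u, snd G e) \<in> L"
  shows "same_tgraph G (logged_tgraph L)"
  unfolding same_tgraph_def
proof (intro conjI ballI)
  show "fst G = fst (logged_tgraph L)"
    unfolding logged_tgraph_def using sound complete by fastforce
next
  fix e assume "e \<in> fst G"
  then have "\<exists>u v. e = {u, v} \<and> (v, u, snd G e) \<in> L" by (rule complete)
  moreover have "snd G e = t" if "\<exists>u v. e = {u, v} \<and> (v, u, t) \<in> L" for t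
    using that sound by blast
  ultimately show "snd G e = snd (logged_tgraph L) e"
    unfolding logged_tgraph_def snd_conv by (rule someI2[where Q = "\<lambda>t. snd G e = t"])
qed

definition sweep_seeds :: "'v list \<Rightarrow> nat \<Rightarrow> 'v history \<Rightarrow> ('v \<times> nat) set" where
  "sweep_seeds vs Tmax h =
     (if length h < length vs * Tmax
      then {(vs ! (length h div Tmax), length h mod Tmax)} else {})"

lemma valid_sweep_seeds:
  assumes "set vs \<subseteq> V" and "k \<ge> 1"
  shows "valid_seeds V Tmax k (sweep_seeds vs Tmax h)"
proof (cases "length h < length vs * Tmax")
  case True
  then have "Tmax > 0" by (metis gr0I mult_0_right not_less0)
  moreover have "length h div Tmax < length vs" using True by (simp add: less_mult_imp_div_less)
  ultimately show ?thesis
    using True assms unfolding valid_seeds_def sweep_seeds_def by auto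
qed (simp add: valid_seeds_def sweep_seeds_def)

lemma sweep_seeds_round:
  assumes "j < length vs" and "s < Tmax"
  shows "j * Tmax + s < length vs * Tmax"
    and "length h = j * Tmax + s \<Longrightarrow> sweep_seeds vs Tmax h = {(vs ! j, s)}"
proof -
  have "j * Tmax + s < Suc j * Tmax" using assms(2) by simp
  also have "\<dots> \<le> length vs * Tmax" using assms(1) by (intro mult_le_mono1) simp
  finally show "j * Tmax + s < length vs * Tmax" .
  then show "length h = j * Tmax + s \<Longrightarrow> sweep_seeds vs Tmax h = {(vs ! j, s)}"
    using assms(2) unfolding sweep_seeds_def by simp
qed

lemma consistent_logged_entry_is_edge:
  assumes "consistent V Tmax \<delta> G h" and "(v, u, t) \<in> (\<Union>p\<in>set h. snd p)"
  shows "{u, v} \<in> fst G \<and> snd G {u, v} = t"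
proof -
  obtain i where "i < length h" and entry: "(v, u, t) \<in> snd (h ! i)"
    using assms(2) by (metis UN_E in_set_conv_nth)
  then have "infection_log V Tmax \<delta> G (fst (h ! i)) (snd (h ! i))"
    using assms(1) unfolding consistent_def by blast
  then show ?thesis using entry by (rule infection_log_entry_is_edge)
qed

lemma sweep_play_logs_every_edge:
  assumes play: "length h = length vs * Tmax"
      "\<forall>i<length vs * Tmax. fst (h ! i) = sweep_seeds vs Tmax (take i h)"
    and cons: "consistent V Tmax \<delta> G h" and "\<delta> \<ge> 1" and "set vs = V"
    and "e \<in> fst G"
  shows "\<exists>u v. e = {u, v} \<and> (v, u, snd G e) \<in> (\<Union>p\<in>set h. snd p)"
proof -
  have tg: "temporal_graph V Tmax G" using cons unfolding consistent_def by blast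
  obtain a b s where "a \<in> V" "b \<in> V" "a \<noteq> b" and e: "e = {a, b}"
    and lab: "snd G e = Suc s" and "s < Tmax"
    using temporal_graph_edgeE[OF tg \<open>e \<in> fst G\<close>] .
  obtain j where "j < length vs" and "vs ! j = a"
    using \<open>a \<in> V\<close> \<open>set vs = V\<close> by (metis in_set_conv_nth)
  define i where "i = j * Tmax + s"
  have "i < length vs * Tmax"
    unfolding i_def using \<open>j < length vs\<close> \<open>s < Tmax\<close> by (rule sweep_seeds_round(1))
  then have "i < length h" and "length (take i h) = j * Tmax + s"
    using play(1) i_def by simp_all
  have "fst (h ! i) = sweep_seeds vs Tmax (take i h)"
    using play(2) \<open>i < length vs * Tmax\<close> by blast
  also have "\<dots> = {(a, s)}"
    using sweep_seeds_round(2)[OF \<open>j < length vs\<close> \<open>s < Tmax\<close> \<open>length (take i h) = _\<close>]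
      \<open>vs ! j = a\<close> by simp
  finally have "fst (h ! i) = {(a, s)}" .
  moreover have "infection_log V Tmax \<delta> G (fst (h ! i)) (snd (h ! i))"
    using cons \<open>i < length h\<close> unfolding consistent_def by blast
  ultimately have log: "infection_log V Tmax \<delta> G {(a, s)} (snd (h ! i))" by simp
  have "(a, b, Suc s) \<in> snd (h ! i)"
    using single_seed_log_records_edge[OF log \<open>\<delta> \<ge> 1\<close> \<open>a \<in> V\<close> \<open>b \<in> V\<close> \<open>a \<noteq> b\<close>]
      \<open>s < Tmax\<close> \<open>e \<in> fst G\<close> e lab by simp
  then have "(a, b, snd G e) \<in> (\<Union>p\<in>set h. snd p)"
    using \<open>i < length h\<close> lab by auto
  moreover have "e = {b, a}" using e by auto
  ultimately show ?thesis by blast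
qed

theorem mainTheorem14:
  fixes V :: "'v set" and Tmax \<delta> k :: nat
  assumes "finite V" and "\<delta> \<ge> 1" and "k \<ge> 1"
  shows "\<exists>nxt gs. discoverer_wins V Tmax \<delta> k nxt gs (card V * Tmax)"
proof -
  obtain vs where vs: "set vs = V" "distinct vs"
    using \<open>finite V\<close> finite_distinct_list by blast
  then have len: "length vs = card V" by (metis distinct_card)
  define gs :: "'v history \<Rightarrow> 'v tgraph" where "gs h = logged_tgraph (\<Union>p\<in>set h. snd p)" for h
  have "same_tgraph G (gs h)"
    if play: "length h = card V * Tmax" "\<forall>i<card V * Tmax. fst (h ! i) = sweep_seeds vs Tmax (take i h)"
      and cons: "consistent V Tmax \<delta> G h" for h G
    unfolding gs_def
  proof (rule same_tgraph_logged_tgraph)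
    show "{u, v} \<in> fst G \<and> snd G {u, v} = t" if "(v, u, t) \<in> (\<Union>p\<in>set h. snd p)" for v u t
      using consistent_logged_entry_is_edge[OF cons that] .
    show "\<exists>u v. e = {u, v} \<and> (v, u, snd G e) \<in> (\<Union>p\<in>set h. snd p)" if "e \<in> fst G" for e
      using sweep_play_logs_every_edge[OF play[folded len] cons \<open>\<delta> \<ge> 1\<close> vs(1) that] .
  qed
  moreover have "valid_seeds V Tmax k (sweep_seeds vs Tmax h)" for h
    using valid_sweep_seeds[of vs V k Tmax h] vs(1) \<open>k \<ge> 1\<close> by simp
  ultimately have "discoverer_wins V Tmax \<delta> k (sweep_seeds vs Tmax) gs (card V * Tmax)"
    unfolding discoverer_wins_def by blast
  then show ?thesis by blast
qed

end
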